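(* Let $\mathfrak{g}$ be one of the following $6$-dimensional nilpotent Lie algebras: $(0,0,12,13,14,15)$, $(0,0,12,13,14,23+15)$, $(0,0,0,12,14,24)$, $(0,0,0,12,13+42,14+23)$, $(0,0,0,12,14,13+42)$, $(0,0,0,12,13+14,24)$, $(0,0,0,12,13,14)$, $(0,0,0,0,12,15)$. Then $\mathfrak{g}$ admits a coherent splitting $\mathfrak{g}^*=V_1\oplus V_2$ with $V_1=\operatorname{span}\{e^1,e^2\}$ (so that $\Lambda^{2,0}$ is spanned by $e^{12}$) for which $h^{0,3}=0=h^{0,4}$.
   Context: Notation: $(0,0,12,13,14,15)$ denotes the Lie algebra having a basis $e^1,\dots,e^6$ of $\mathfrak{g}^*$ with $de^1=de^2=0$, $de^3=e^{12}$, $de^4=e^{13}$, $de^5=e^{14}$, $de^6=e^{15}$, where $e^{ij}=e^i\wedge e^j$, entries like $13+42$ mean $e^{13}+e^4\wedge e^2$, and $d$ is the Chevalley–Eilenberg differential. A coherent splitting is a decomposition $\mathfrak{g}^*=V_1\oplus V_2$ with $\dim V_1=2$ such that, with $\Lambda^{p,q}=\Lambda^pV_1\otimes\Lambda^qV_2$, $d(\Lambda^{p,q})\subset\Lambda^{p+1,q}+\Lambda^{p+2,q-1}$. With $F^k_p=\bigoplus_{p'\ge p}\Lambda^{p',k-p'}$, $Z^k$ the closed $k$-forms, $H^k$ the $k$-th cohomology of $(\Lambda^*\mathfrak{g}^*,d)$ and $H^k_p\subset H^k$ the image of $Z^k\cap F^k_p$, set $H^{p,q}=H^{p+q}_p/H^{p+q}_{p+1}$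 and $h^{p,q}=\dim H^{p,q}$ (these depend only on $V_1$). *)

theory Defs
  imports "HOL-Analysis.Analysis"
begin

datatype idx = X1 | X2 | X3 | X4 | X5 | X6

lemma UNIV_idx: "(UNIV :: idx set) = {X1, X2, X3, X4, X5, X6}"
  using idx.exhaust by auto

instance idx :: finite
  by standard (simp add: UNIV_idx)

fun num :: "idx \<Rightarrow> nat" where
  "num X1 = 1" | "num X2 = 2" | "num X3 = 3" | "num X4 = 4" | "num X5 = 5" | "num X6 = 6"

text \<open>A form is given by its coefficients on the basis e^I = e^{i1} wedge ... wedge e^{ik},
  I = {i1 < ... < ik} (order given by num).\<close>
type_synonym form = "real ^ (idx set)"

definition sgn_merge :: "idx set \<Rightarrow> idx set \<Rightarrow> real" where
  "sgn_merge I J = (-1) ^ card {(i, j). i \<in> I \<and> j \<in> J \<and> num j < num i}"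

definition wedge :: "form \<Rightarrow> form \<Rightarrow> form" where
  "wedge a b = (\<chi> K. \<Sum>I\<in>Pow K. sgn_merge I (K - I) * a $ I * b $ (K - I))"

definition unit_form :: form where
  "unit_form = axis {} 1"

definition e :: "idx \<Rightarrow> form" where
  "e i = axis {i} 1"

definition ee :: "idx \<Rightarrow> idx \<Rightarrow> form" where
  "ee i j = wedge (e i) (e j)"

definition wedges :: "form list \<Rightarrow> form" where
  "wedges xs = foldr wedge xs unit_form"

definition Lam :: "nat \<Rightarrow> form set" where
  "Lam k = span {axis I 1 | I. card I = k}"

section \<open>Chevalley--Eilenberg differential determined by the values D i = d e^i\<close>

definition d_basis :: "(idx \<Rightarrow> form) \<Rightarrow> idx set \<Rightarrow> form" where
  "d_basis D I = (\<Sum>i\<in>I. ((-1) ^ card {j \<in> I. num j < num i}) *\<^sub>R wedge (D i) (axis (I - {i}) 1))"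

definition dd :: "(idx \<Rightarrow> form) \<Rightarrow> form \<Rightarrow> form" where
  "dd D a = (\<Sum>I\<in>UNIV. (a $ I) *\<^sub>R d_basis D I)"

fun alg1 :: "idx \<Rightarrow> form" where
  "alg1 X1 = 0" | "alg1 X2 = 0" | "alg1 X3 = ee X1 X2" | "alg1 X4 = ee X1 X3"
| "alg1 X5 = ee X1 X4" | "alg1 X6 = ee X1 X5"

fun alg2 :: "idx \<Rightarrow> form" where
  "alg2 X1 = 0" | "alg2 X2 = 0" | "alg2 X3 = ee X1 X2" | "alg2 X4 = ee X1 X3"
| "alg2 X5 = ee X1 X4" | "alg2 X6 = ee X2 X3 + ee X1 X5"

fun alg3 :: "idx \<Rightarrow> form" where
  "alg3 X1 = 0" | "alg3 X2 = 0" | "alg3 X3 = 0" | "alg3 X4 = ee X1 X2"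
| "alg3 X5 = ee X1 X4" | "alg3 X6 = ee X2 X4"

fun alg4 :: "idx \<Rightarrow> form" where
  "alg4 X1 = 0" | "alg4 X2 = 0" | "alg4 X3 = 0" | "alg4 X4 = ee X1 X2"
| "alg4 X5 = ee X1 X3 + ee X4 X2" | "alg4 X6 = ee X1 X4 + ee X2 X3"

fun alg5 :: "idx \<Rightarrow> form" where
  "alg5 X1 = 0" | "alg5 X2 = 0" | "alg5 X3 = 0" | "alg5 X4 = ee X1 X2"
| "alg5 X5 = ee X1 X4" | "alg5 X6 = ee X1 X3 + ee X4 X2"

fun alg6 :: "idx \<Rightarrow> form" where
  "alg6 X1 = 0" | "alg6 X2 = 0" | "alg6 X3 = 0" | "alg6 X4 = ee X1 X2"
| "alg6 X5 = ee X1 X3 + ee X1 X4" | "alg6 X6 = ee X2 X4"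

fun alg7 :: "idx \<Rightarrow> form" where
  "alg7 X1 = 0" | "alg7 X2 = 0" | "alg7 X3 = 0" | "alg7 X4 = ee X1 X2"
| "alg7 X5 = ee X1 X3" | "alg7 X6 = ee X1 X4"

fun alg8 :: "idx \<Rightarrow> form" where
  "alg8 X1 = 0" | "alg8 X2 = 0" | "alg8 X3 = 0" | "alg8 X4 = 0"
| "alg8 X5 = ee X1 X2" | "alg8 X6 = ee X1 X5"

definition bideg :: "form set \<Rightarrow> form set \<Rightarrow> nat \<Rightarrow> nat \<Rightarrow> form set" where
  "bideg V1 V2 p q = span {wedges (xs @ ys) | xs ys.
      length xs = p \<and> set xs \<subseteq> V1 \<and> length ys = q \<and> set ys \<subseteq> V2}"

definition set_sum :: "form set \<Rightarrow> form set \<Rightarrow> form set" where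
  "set_sum A B = {x + y | x y. x \<in> A \<and> y \<in> B}"

definition splitting :: "form set \<Rightarrow> form set \<Rightarrow> bool" where
  "splitting V1 V2 \<longleftrightarrow> subspace V1 \<and> subspace V2 \<and> V1 \<subseteq> Lam 1 \<and> V2 \<subseteq> Lam 1
     \<and> V1 \<inter> V2 = {0} \<and> set_sum V1 V2 = Lam 1 \<and> dim V1 = 2"

definition coherent :: "(idx \<Rightarrow> form) \<Rightarrow> form set \<Rightarrow> form set \<Rightarrow> bool" where
  "coherent D V1 V2 \<longleftrightarrow> splitting V1 V2 \<and>
     (\<forall>p q. dd D ` bideg V1 V2 p q \<subseteq>
        set_sum (bideg V1 V2 (p + 1) q) (if q = 0 then {0} else bideg V1 V2 (p + 2) (q - 1)))"

definition filt :: "form set \<Rightarrow> form set \<Rightarrow> nat \<Rightarrow> nat \<Rightarrow> form set" where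
  "filt V1 V2 k p = span (\<Union>p'\<in>{p..k}. bideg V1 V2 p' (k - p'))"

definition closed_forms :: "(idx \<Rightarrow> form) \<Rightarrow> nat \<Rightarrow> form set" where
  "closed_forms D k = {a \<in> Lam k. dd D a = 0}"

definition exact_forms :: "(idx \<Rightarrow> form) \<Rightarrow> nat \<Rightarrow> form set" where
  "exact_forms D k = (if k = 0 then {0} else dd D ` Lam (k - 1))"

text \<open>The preimage in Z^k of H^k_p (the image of Z^k cap F^k_p in H^k = Z^k / B^k),
  i.e. (Z^k cap F^k_p) + B^k; hence dim H^k_p = dim of this space minus dim B^k.\<close>
definition Hfilt_lift :: "(idx \<Rightarrow> form) \<Rightarrow> form set \<Rightarrow> form set \<Rightarrow> nat \<Rightarrow> nat \<Rightarrow> form set" where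
  "Hfilt_lift D V1 V2 k p = set_sum (closed_forms D k \<inter> filt V1 V2 k p) (exact_forms D k)"

text \<open>h^{p,q} = dim H^{p+q}_p / H^{p+q}_{p+1} = dim H^{p+q}_p - dim H^{p+q}_{p+1}.\<close>
definition hpq :: "(idx \<Rightarrow> form) \<Rightarrow> form set \<Rightarrow> form set \<Rightarrow> nat \<Rightarrow> nat \<Rightarrow> nat" where
  "hpq D V1 V2 p q = dim (Hfilt_lift D V1 V2 (p + q) p) - dim (Hfilt_lift D V1 V2 (p + q) (p + 1))"

end

theory Submission
  imports Defs
begin

(*
  The splitting is V1 = span {e^1, e^2}, V2 = span {e^3, ..., e^6}, so that e^I has bidegree
  (|I \<inter> {1,2}|, |I - {1,2}|). In all eight algebras d e^1 = d e^2 = 0 and each d e^i is a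
  combination of e^{jk} with {j,k} meeting {1,2}, i.e. d e^i \<in> \<Lambda>^{2,0} + \<Lambda>^{1,1}; as d acts on
  e^I through the d e^i, it raises the first degree by one or two, which is coherence.
  Furthermore H^k_0 = H^k_1, i.e. h^{0,k} = 0, as soon as no closed k-form has a component in
  \<Lambda>^{0,k}; for k = 3, 4 this follows by solving the linear equations that a few coefficients
  of da = 0 impose on the coefficients of a on e^I, I \<subseteq> {3,...,6}.
*)

section \<open>Wedge products of basis forms\<close>

lemma axis_nth_if: "axis I c $ J = (if J = I then c else 0)"
  by (simp add: axis_def)

lemma wedge_nonzero_split:
  assumes "wedge x y $ K \<noteq> 0"
  obtains L where "L \<subseteq> K" "x $ L \<noteq> 0" "y $ (K - L) \<noteq> 0"
proof -
  have "(\<Sum>I\<in>Pow K. sgn_merge I (K - I) * x $ I * y $ (K - I)) \<noteq> 0"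
    using assms by (simp add: wedge_def)
  then obtain L where "L \<in> Pow K" "sgn_merge L (K - L) * x $ L * y $ (K - L) \<noteq> 0"
    by (meson sum.neutral)
  then show thesis using that by auto
qed

lemma wedge_zero_left [simp]: "wedge 0 y = 0"
  by (simp add: wedge_def vec_eq_iff)

lemma wedge_axis_right:
  "wedge x (axis J c) $ K = (if J \<subseteq> K then sgn_merge (K - J) J * x $ (K - J) * c else 0)"
proof -
  have "wedge x (axis J c) $ K
      = (\<Sum>L\<in>Pow K. if L = K - J \<and> J \<subseteq> K then sgn_merge L (K - L) * x $ L * c else 0)"
    unfolding wedge_def vec_lambda_beta
    by (rule sum.cong) (auto simp: axis_nth_if)
  also have "\<dots> = (if J \<subseteq> K then sgn_merge (K - J) J * x $ (K - J) * c else 0)"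
    by (auto simp: sum.delta' double_diff)
  finally show ?thesis .
qed

lemma wedge_axis_axis:
  "wedge (axis I a) (axis J b) =
     (if I \<inter> J = {} then axis (I \<union> J) (sgn_merge I J * a * b) else 0)"
proof (rule vec_eq_iff[THEN iffD2, rule_format])
  fix K
  have "J \<subseteq> K \<and> K - J = I \<longleftrightarrow> I \<inter> J = {} \<and> K = I \<union> J" by auto
  then show "wedge (axis I a) (axis J b) $ K =
      (if I \<inter> J = {} then axis (I \<union> J) (sgn_merge I J * a * b) else 0) $ K"
    by (auto simp: wedge_axis_right axis_nth_if)
qed

definition count_below :: "idx \<Rightarrow> idx set \<Rightarrow> nat" where
  "count_below i J = card {j \<in> J. num j < num i}"

lemma count_below_empty [simp]: "count_below i {} = 0"
  by (simp add: count_below_def)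

lemma count_below_insert [simp]:
  "count_below i (insert j J) =
     (if j \<in> J then count_below i J else (if num j < num i then 1 else 0) + count_below i J)"
proof -
  have "{k \<in> insert j J. num k < num i} =
      (if num j < num i then insert j {k \<in> J. num k < num i} else {k \<in> J. num k < num i})"
    by auto
  then show ?thesis
    by (auto simp: count_below_def card_insert_if)
qed

lemma sgn_merge_empty [simp]: "sgn_merge {} J = 1"
  by (simp add: sgn_merge_def)

lemma sgn_merge_insert:
  assumes "i \<notin> I"
  shows "sgn_merge (insert i I) J = (-1) ^ count_below i J * sgn_merge I J"
proof -
  let ?S = "\<lambda>I. {(i, j). i \<in> I \<and> j \<in> J \<and> num j < num i}"
  have split: "?S (insert i I) = Pair i ` {j \<in> J. num j < num i} \<union> ?S I"
    and disjoint: "Pair i ` {j \<in> J. num j < num i} \<inter> ?S I = {}"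
    using assms by auto
  have "card (?S (insert i I)) = count_below i J + card (?S I)"
    unfolding split count_below_def
    by (subst card_Un_disjoint) (use disjoint in \<open>auto simp: card_image inj_on_def\<close>)
  then show ?thesis
    by (simp add: sgn_merge_def power_add)
qed

lemma sgn_merge_nonzero: "sgn_merge I J \<noteq> 0"
  by (simp add: sgn_merge_def)

lemma ee_eq: "ee i j = (if i = j then 0 else axis {i, j} (if num j < num i then -1 else 1))"
proof -
  have "sgn_merge {i} {j} = (if num j < num i then -1 else 1)"
    by (simp add: sgn_merge_insert)
  then show ?thesis
    by (auto simp: ee_def e_def wedge_axis_axis insert_commute)
qed

lemma wedges_e_distinct:
  "distinct l \<Longrightarrow> \<exists>c. c \<noteq> 0 \<and> wedges (map e l) = axis (set l) c"
proof (induction l)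
  case Nil
  then show ?case by (auto simp: wedges_def unit_form_def)
next
  case (Cons x l)
  then obtain c where "c \<noteq> 0" "wedges (map e l) = axis (set l) c" by auto
  then have "wedges (map e (x # l)) = axis (set (x # l)) (sgn_merge {x} (set l) * c)"
    using Cons.prems by (simp add: wedges_def e_def wedge_axis_axis)
  then show ?case using \<open>c \<noteq> 0\<close> sgn_merge_nonzero by (metis mult_eq_0_iff)
qed

section \<open>The differential in coordinates\<close>

(* the contribution of d e^i = x to the coefficient of e^K in d a *)
definition ce_coeff :: "form \<Rightarrow> idx \<Rightarrow> idx set \<Rightarrow> form \<Rightarrow> real" where
  "ce_coeff a i K x = (\<Sum>J | i \<notin> J \<and> J \<subseteq> K.
      a $ insert i J * (-1) ^ count_below i J * sgn_merge (K - J) J * x $ (K - J))"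

lemma sum_sets_containing:
  "(\<Sum>I | i \<in> I. f I) = (\<Sum>J | i \<notin> J. f (insert i J))" for f :: "idx set \<Rightarrow> real"
  by (rule sum.reindex_bij_witness[where i="insert i" and j="\<lambda>I. I - {i}"]) (auto simp: insert_absorb)

lemma dd_nth_ce_coeff: "dd D a $ K = (\<Sum>i\<in>UNIV. ce_coeff a i K (D i))"
proof -
  define t where "t i I = a $ I * (-1) ^ count_below i I * wedge (D i) (axis (I - {i}) 1) $ K"
    for i I
  have "dd D a $ K = (\<Sum>I\<in>UNIV. \<Sum>i\<in>UNIV. if i \<in> I then t i I else 0)"
    by (simp add: dd_def d_basis_def t_def count_below_def sum_distrib_left sum.If_cases
        mult.assoc)
  also have "\<dots> = (\<Sum>i\<in>UNIV. \<Sum>I | i \<in> I. t i I)"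
    by (subst sum.swap) (simp add: sum.If_cases Int_def)
  also have "\<dots> = (\<Sum>i\<in>UNIV. \<Sum>J | i \<notin> J. t i (insert i J))"
    by (simp only: sum_sets_containing)
  also have "\<dots> = (\<Sum>i\<in>UNIV. ce_coeff a i K (D i))"
  proof (rule sum.cong[OF refl])
    fix i
    have "t i (insert i J) =
        (if J \<subseteq> K then a $ insert i J * (-1) ^ count_below i J * sgn_merge (K - J) J * D i $ (K - J)
         else 0)" if "i \<notin> J" for J
      using that by (simp add: t_def wedge_axis_right)
    then have "(\<Sum>J | i \<notin> J. t i (insert i J)) = (\<Sum>J\<in>{J. i \<notin> J}. if J \<subseteq> K
        then a $ insert i J * (-1) ^ count_below i J * sgn_merge (K - J) J * D i $ (K - J) else 0)"
      by (intro sum.cong) auto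
    also have "\<dots> = ce_coeff a i K (D i)"
      unfolding ce_coeff_def by (subst sum.inter_filter[symmetric]) (simp_all add: Collect_conj_eq)
    finally show "(\<Sum>J | i \<notin> J. t i (insert i J)) = ce_coeff a i K (D i)" .
  qed
  finally show ?thesis .
qed

lemma ce_coeff_zero [simp]: "ce_coeff a i K 0 = 0"
  by (simp add: ce_coeff_def)

lemma ce_coeff_add [simp]: "ce_coeff a i K (x + y) = ce_coeff a i K x + ce_coeff a i K y"
  by (simp add: ce_coeff_def sum.distrib[symmetric] algebra_simps)

lemma ce_coeff_axis [simp]:
  "ce_coeff a i K (axis L c) =
     (if L \<subseteq> K \<and> i \<notin> K - L
      then a $ insert i (K - L) * (-1) ^ count_below i (K - L) * sgn_merge L (K - L) * c else 0)"
proof -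
  have "ce_coeff a i K (axis L c) = (\<Sum>J | i \<notin> J \<and> J \<subseteq> K.
      if J = K - L then (if L \<subseteq> K then a $ insert i J * (-1) ^ count_below i J * sgn_merge L J * c
      else 0) else 0)"
    unfolding ce_coeff_def by (rule sum.cong) (auto simp: axis_nth_if double_diff)
  then show ?thesis
    by (auto simp: sum.delta)
qed

section \<open>Bidegrees\<close>

abbreviation V1 :: "idx set \<Rightarrow> form set" where
  "V1 A \<equiv> span (e ` A)"

abbreviation V2 :: "idx set \<Rightarrow> form set" where
  "V2 A \<equiv> span (e ` (- A))"

definition supported :: "(idx set \<Rightarrow> bool) \<Rightarrow> form set" where
  "supported P = {x. \<forall>I. x $ I \<noteq> 0 \<longrightarrow> P I}"

lemma subspace_supported: "subspace (supported P)"
  by (auto simp: subspace_def supported_def) (metis add.left_neutral)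

lemma axis_in_supported: "P I \<Longrightarrow> axis I c \<in> supported P"
  by (auto simp: supported_def axis_nth_if)

lemma span_e_supported: "span (e ` B) \<subseteq> supported (\<lambda>I. \<exists>b\<in>B. I = {b})"
  by (rule span_minimal) (auto simp: subspace_supported e_def intro: axis_in_supported)

lemma supported_in_subspace:
  assumes "x \<in> supported P" "subspace S" "\<And>J. P J \<Longrightarrow> axis J 1 \<in> S"
  shows "x \<in> S"
proof -
  have "x = (\<Sum>J\<in>UNIV. x $ J *\<^sub>R axis J 1)"
    using basis_expansion[of x] by (simp add: scalar_mult_eq_scaleR)
  also have "\<dots> \<in> S"
  proof (rule subspace_sum[OF \<open>subspace S\<close>])
    fix J
    show "x $ J *\<^sub>R axis J 1 \<in> S"
      using assms by (cases "x $ J = 0") (auto simp: supported_def subspace_0 subspace_scale)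
  qed
  finally show ?thesis .
qed

lemma wedge_singletons_supported:
  assumes "x \<in> supported (\<lambda>I. \<exists>b\<in>B. I = {b})" "y \<in> supported P"
  shows "wedge x y \<in> supported (\<lambda>K. \<exists>b\<in>B. b \<in> K \<and> P (K - {b}))"
  unfolding supported_def
proof (intro CollectI allI impI)
  fix K assume "wedge x y $ K \<noteq> 0"
  then obtain L where "L \<subseteq> K" "x $ L \<noteq> 0" "y $ (K - L) \<noteq> 0"
    by (rule wedge_nonzero_split)
  moreover from \<open>x $ L \<noteq> 0\<close> obtain b where "b \<in> B" "L = {b}"
    using assms(1) by (auto simp: supported_def)
  ultimately show "\<exists>b\<in>B. b \<in> K \<and> P (K - {b})"
    using assms(2) by (auto simp: supported_def)
qed

definition bidegree :: "idx set \<Rightarrow> idx set \<Rightarrow> nat \<times> nat" where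
  "bidegree A I = (card (I \<inter> A), card (I - A))"

lemma bidegree_Un:
  "I \<inter> J = {} \<Longrightarrow> bidegree A (I \<union> J) = bidegree A I + bidegree A J"
  by (simp add: bidegree_def Int_Un_distrib2 Un_Diff card_Un_disjoint disjoint_iff)

lemma bidegree_singleton: "bidegree A {b} = (if b \<in> A then (1, 0) else (0, 1))"
  by (simp add: bidegree_def insert_Diff_if)

lemma bidegree_remove:
  assumes "b \<in> K" "bidegree A (K - {b}) = (p, q)"
  shows "bidegree A K = (if b \<in> A then (Suc p, q) else (p, Suc q))"
  using bidegree_Un[of "{b}" "K - {b}" A] assms by (simp add: insert_absorb bidegree_singleton)

lemma wedges_supported:
  assumes "set xs \<subseteq> V1 A" "set ys \<subseteq> V2 A"
  shows "wedges (xs @ ys) \<in> supported (\<lambda>I. bidegree A I = (length xs, length ys))"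
proof -
  have "foldr wedge ys unit_form \<in> supported (\<lambda>I. bidegree A I = (0, length ys))"
    using assms(2)
  proof (induction ys)
    case Nil
    show ?case by (simp add: unit_form_def bidegree_def axis_in_supported)
  next
    case (Cons y ys)
    then have "wedge y (foldr wedge ys unit_form)
        \<in> supported (\<lambda>K. \<exists>b\<in>- A. b \<in> K \<and> bidegree A (K - {b}) = (0, length ys))"
      using span_e_supported by (intro wedge_singletons_supported) auto
    then show ?case
      by (auto simp: supported_def) (metis ComplD bidegree_remove)
  qed
  then show ?thesis
    using assms(1)
  proof (induction xs)
    case Nil
    then show ?case by (simp add: wedges_def)
  next
    case (Cons x xs)
    then have "wedge x (wedges (xs @ ys))
        \<in> supported (\<lambda>K. \<exists>b\<in>A. b \<in> K \<and> bidegree A (K - {b}) = (length xs, length ys))"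
      using span_e_supported by (intro wedge_singletons_supported) auto
    then show ?case
      by (auto simp: wedges_def supported_def) (metis bidegree_remove)
  qed
qed

lemma bideg_subset_supported:
  "bideg (V1 A) (V2 A) p q \<subseteq> supported (\<lambda>I. bidegree A I = (p, q))"
  unfolding bideg_def
proof (intro span_minimal subspace_supported subsetI)
  fix w assume "w \<in> {wedges (xs @ ys) |xs ys. length xs = p \<and> set xs \<subseteq> V1 A
      \<and> length ys = q \<and> set ys \<subseteq> V2 A}"
  then obtain xs ys where "w = wedges (xs @ ys)" "length xs = p" "length ys = q"
    "set xs \<subseteq> V1 A" "set ys \<subseteq> V2 A"
    by blast
  then show "w \<in> supported (\<lambda>I. bidegree A I = (p, q))"
    using wedges_supported[of xs A ys] by simp
qed

lemma axis_in_bideg: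
  assumes "bidegree A J = (p, q)"
  shows "axis J c \<in> bideg (V1 A) (V2 A) p q"
proof -
  obtain l1 where l1: "set l1 = J \<inter> A" "distinct l1"
    using finite_distinct_list[of "J \<inter> A"] by auto
  obtain l2 where l2: "set l2 = J - A" "distinct l2"
    using finite_distinct_list[of "J - A"] by auto
  have "distinct (l1 @ l2)"
    using l1 l2 by auto
  then obtain c' where "c' \<noteq> 0" and c': "wedges (map e l1 @ map e l2) = axis J c'"
    using wedges_e_distinct[of "l1 @ l2"] l1(1) l2(1) by (auto simp: Int_Diff_Un)
  have "length (map e l1) = p" "length (map e l2) = q"
    using assms l1 l2 distinct_card by (fastforce simp: bidegree_def)+
  moreover have "set (map e l1) \<subseteq> V1 A" "set (map e l2) \<subseteq> V2 A"
    using l1 l2 by (auto intro: span_base)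
  ultimately have "axis J c' \<in> bideg (V1 A) (V2 A) p q"
    unfolding bideg_def c'[symmetric] by (intro span_base) blast
  then have "(c / c') *\<^sub>R axis J c' \<in> bideg (V1 A) (V2 A) p q"
    unfolding bideg_def by (rule span_mul)
  moreover have "(c / c') *\<^sub>R axis J c' = axis J c"
    using \<open>c' \<noteq> 0\<close> by (simp add: vec_eq_iff axis_nth_if)
  ultimately show ?thesis by simp
qed

section \<open>Coherence of V1 \<oplus> V2 and vanishing of h^{0,k}\<close>

lemma set_sum_span: "set_sum (span S) (span T) = span (S \<union> T)"
  by (simp add: set_sum_def span_Un)

lemma subspace_set_sum: "subspace X \<Longrightarrow> subspace Y \<Longrightarrow> subspace (set_sum X Y)"
  using set_sum_span[of X Y] by (metis span_eq_iff subspace_span)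

(* d e^i = 0 for e^i \<in> V1, and d e^i \<in> \<Lambda>^{2,0} + \<Lambda>^{1,1} for all i *)
definition adapted :: "(idx \<Rightarrow> form) \<Rightarrow> idx set \<Rightarrow> bool" where
  "adapted D A \<longleftrightarrow> (\<forall>i\<in>A. D i = 0) \<and> (\<forall>i. D i \<in> supported (\<lambda>L. card L = 2 \<and> L \<inter> A \<noteq> {}))"

lemma bidegree_card_2:
  assumes "card L = 2" "L \<inter> A \<noteq> {}"
  shows "bidegree A L = (1, 1) \<or> bidegree A L = (2, 0)"
proof -
  have "card (L \<inter> A) + card (L - A) = 2" "card (L \<inter> A) \<noteq> 0"
    using assms card_Int_Diff[of L A] by auto
  then have "card (L \<inter> A) = 1 \<and> card (L - A) = 1 \<or> card (L \<inter> A) = 2 \<and> card (L - A) = 0"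
    by arith
  then show ?thesis
    by (auto simp: bidegree_def)
qed

lemma d_basis_supported:
  assumes "adapted D A" "bidegree A I = (p, q)"
  shows "d_basis D I \<in> supported
    (\<lambda>K. bidegree A K = (p + 1, q) \<or> q \<noteq> 0 \<and> bidegree A K = (p + 2, q - 1))"
  unfolding d_basis_def
proof (intro subspace_sum[OF subspace_supported] subspace_scale[OF subspace_supported])
  fix i assume "i \<in> I"
  show "wedge (D i) (axis (I - {i}) 1) \<in> supported
    (\<lambda>K. bidegree A K = (p + 1, q) \<or> q \<noteq> 0 \<and> bidegree A K = (p + 2, q - 1))"
  proof (cases "i \<in> A")
    case True
    then show ?thesis
      using assms(1) by (simp add: adapted_def subspace_0[OF subspace_supported])
  next
    case False
    obtain r s where rs: "bidegree A (I - {i}) = (r, s)"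
      by fastforce
    have "bidegree A I = bidegree A {i} + bidegree A (I - {i})"
      using bidegree_Un[of "{i}" "I - {i}" A] \<open>i \<in> I\<close> by (simp add: insert_absorb)
    then have "p = r" "q = Suc s"
      using assms(2) False rs by (simp_all add: bidegree_singleton)
    then have rest: "bidegree A (I - {i}) = (p, q - 1)" and "q \<noteq> 0"
      using rs by simp_all
    show ?thesis
      unfolding supported_def
    proof (intro CollectI allI impI)
      fix K assume "wedge (D i) (axis (I - {i}) 1) $ K \<noteq> 0"
      then obtain L where "L \<subseteq> K" "D i $ L \<noteq> 0" and "axis (I - {i}) (1::real) $ (K - L) \<noteq> 0"
        by (rule wedge_nonzero_split)
      then have "K = L \<union> (I - {i})" "L \<inter> (I - {i}) = {}" and L: "card L = 2" "L \<inter> A \<noteq> {}"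
        using assms(1) by (auto simp: axis_nth_if adapted_def supported_def split: if_splits)
      then have "bidegree A K = bidegree A L + (p, q - 1)"
        using bidegree_Un[of L "I - {i}" A] rest by simp
      then show "bidegree A K = (p + 1, q) \<or> q \<noteq> 0 \<and> bidegree A K = (p + 2, q - 1)"
        using bidegree_card_2[OF L] \<open>q \<noteq> 0\<close> by auto
    qed
  qed
qed

lemma zero_in_bideg: "0 \<in> bideg V W p q"
  by (simp add: bideg_def span_zero)

lemma supported_in_coherence_target:
  assumes "x \<in> supported
    (\<lambda>K. bidegree A K = (p + 1, q) \<or> q \<noteq> 0 \<and> bidegree A K = (p + 2, q - 1))"
  shows "x \<in> set_sum (bideg (V1 A) (V2 A) (p + 1) q)
    (if q = 0 then {0} else bideg (V1 A) (V2 A) (p + 2) (q - 1))"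
proof (rule supported_in_subspace[OF assms])
  show "subspace (set_sum (bideg (V1 A) (V2 A) (p + 1) q)
    (if q = 0 then {0} else bideg (V1 A) (V2 A) (p + 2) (q - 1)))"
    by (intro subspace_set_sum) (auto simp: bideg_def subspace_span)
  fix J assume "bidegree A J = (p + 1, q) \<or> q \<noteq> 0 \<and> bidegree A J = (p + 2, q - 1)"
  then consider "axis J 1 \<in> bideg (V1 A) (V2 A) (p + 1) q"
    | "q \<noteq> 0" "axis J 1 \<in> bideg (V1 A) (V2 A) (p + 2) (q - 1)"
    using axis_in_bideg by blast
  then show "axis J 1 \<in> set_sum (bideg (V1 A) (V2 A) (p + 1) q)
    (if q = 0 then {0} else bideg (V1 A) (V2 A) (p + 2) (q - 1))"
  proof cases
    case 1
    moreover have "0 \<in> (if q = 0 then {0} else bideg (V1 A) (V2 A) (p + 2) (q - 1))"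
      by (simp add: zero_in_bideg)
    ultimately show ?thesis
      unfolding set_sum_def by force
  next
    case 2
    then show ?thesis
      unfolding set_sum_def using zero_in_bideg by force
  qed
qed

lemma dd_bideg:
  assumes "adapted D A" "a \<in> bideg (V1 A) (V2 A) p q"
  shows "dd D a \<in> set_sum (bideg (V1 A) (V2 A) (p + 1) q)
    (if q = 0 then {0} else bideg (V1 A) (V2 A) (p + 2) (q - 1))"
proof -
  have "a $ I *\<^sub>R d_basis D I \<in> supported
    (\<lambda>K. bidegree A K = (p + 1, q) \<or> q \<noteq> 0 \<and> bidegree A K = (p + 2, q - 1))" for I
  proof (cases "a $ I = 0")
    case False
    then have "bidegree A I = (p, q)"
      using assms(2) bideg_subset_supported by (fastforce simp: supported_def)
    then show ?thesis
      using assms(1) d_basis_supported subspace_scale[OF subspace_supported] by blast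
  qed (simp add: subspace_0[OF subspace_supported])
  then have "dd D a \<in> supported
    (\<lambda>K. bidegree A K = (p + 1, q) \<or> q \<noteq> 0 \<and> bidegree A K = (p + 2, q - 1))"
    unfolding dd_def by (intro subspace_sum[OF subspace_supported])
  then show ?thesis
    by (rule supported_in_coherence_target)
qed

lemma Lam_1_eq_span_e: "Lam 1 = span (range e)"
proof -
  have "{axis I 1 | I. card I = 1} = range e"
    by (auto simp: e_def card_1_singleton_iff)
  then show ?thesis by (simp add: Lam_def)
qed

lemma Lam_supported: "Lam k \<subseteq> supported (\<lambda>I. card I = k)"
  unfolding Lam_def
  by (rule span_minimal) (auto simp: subspace_supported intro: axis_in_supported)

lemma splitting_V1_V2:
  assumes "card A = 2"
  shows "splitting (V1 A) (V2 A)"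
  unfolding splitting_def
proof (intro conjI)
  show "V1 A \<subseteq> Lam 1" "V2 A \<subseteq> Lam 1"
    unfolding Lam_1_eq_span_e by (simp_all add: span_mono image_mono)
  show "set_sum (V1 A) (V2 A) = Lam 1"
    unfolding set_sum_span Lam_1_eq_span_e by (simp add: image_Un[symmetric])
  show "V1 A \<inter> V2 A = {0}"
  proof (intro equalityI subsetI)
    fix x assume "x \<in> V1 A \<inter> V2 A"
    then have "x \<in> supported (\<lambda>I. \<exists>b\<in>A. I = {b})" "x \<in> supported (\<lambda>I. \<exists>b\<in>- A. I = {b})"
      using span_e_supported by blast+
    then show "x \<in> {0}"
      by (auto simp: supported_def vec_eq_iff)
  qed (simp add: span_zero)
  have "e ` A \<subseteq> Basis"
    by (auto simp: Basis_vec_def e_def)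
  moreover have "inj e"
    by (auto simp: inj_def e_def axis_eq_axis)
  ultimately have "dim (e ` A) = card A"
    using independent_mono[OF independent_Basis] dim_eq_card_independent
    by (metis card_image inj_on_subset subset_UNIV)
  then show "dim (V1 A) = 2"
    using assms by simp
qed (simp_all add: subspace_span)

lemma coherent_V1_V2:
  assumes "card A = 2" "adapted D A"
  shows "coherent D (V1 A) (V2 A)"
  unfolding coherent_def
  using splitting_V1_V2[OF assms(1)] dd_bideg[OF assms(2)] by blast

lemma pure_vanishing_in_filt_1:
  assumes "a \<in> Lam k" "\<And>I. I \<inter> A = {} \<Longrightarrow> card I = k \<Longrightarrow> a $ I = 0"
  shows "a \<in> filt (V1 A) (V2 A) k 1"
proof (rule supported_in_subspace)
  show "a \<in> supported (\<lambda>I. card I = k \<and> I \<inter> A \<noteq> {})"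
    using assms Lam_supported by (auto simp: supported_def)
  show "subspace (filt (V1 A) (V2 A) k 1)"
    by (simp add: filt_def subspace_span)
  fix J assume J: "card J = k \<and> J \<inter> A \<noteq> {}"
  define p where "p = card (J \<inter> A)"
  have "1 \<le> p" "p \<le> k" "bidegree A J = (p, k - p)"
    using J card_Int_Diff[of J A] by (auto simp: p_def bidegree_def Suc_le_eq card_gt_0_iff)
  then have "axis J 1 \<in> bideg (V1 A) (V2 A) p (k - p)" "p \<in> {1..k}"
    using axis_in_bideg by auto
  then show "axis J 1 \<in> filt (V1 A) (V2 A) k 1"
    unfolding filt_def by (blast intro: span_base)
qed

lemma hpq_0_eq_0_if_closed_in_filt_1:
  assumes "closed_forms D k \<subseteq> filt V W k 1"
  shows "hpq D V W 0 k = 0"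
proof -
  have "Hfilt_lift D V W k 0 \<subseteq> Hfilt_lift D V W k 1"
    unfolding Hfilt_lift_def set_sum_def using assms by blast
  then show ?thesis
    by (simp add: hpq_def dim_subset)
qed

lemma hpq_0_eq_0_if_closed_pure_vanish:
  assumes "\<And>a I. a \<in> closed_forms D k \<Longrightarrow> I \<inter> A = {} \<Longrightarrow> card I = k \<Longrightarrow> a $ I = 0"
  shows "hpq D (V1 A) (V2 A) 0 k = 0"
  using assms pure_vanishing_in_filt_1
  by (intro hpq_0_eq_0_if_closed_in_filt_1) (auto simp: closed_forms_def)

section \<open>The eight algebras\<close>

lemma pure_index_sets:
  assumes "I \<inter> {X1, X2} = {}" "3 \<le> card I"
  shows "I \<in> {{X3, X4, X5}, {X3, X4, X6}, {X3, X5, X6}, {X4, X5, X6}, {X3, X4, X5, X6}}"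
proof -
  let ?S = "{X3, X4, X5, X6}"
  have "I \<subseteq> ?S"
  proof
    fix x assume "x \<in> I"
    with assms(1) show "x \<in> ?S" by (cases x) auto
  qed
  then have I: "I = ?S - (?S - I)" and "card (?S - I) \<le> 1"
    using assms(2) by (auto simp: card_Diff_subset)
  then consider "?S - I = {}" | x where "x \<in> ?S" "?S - I = {x}"
    by (cases "card (?S - I)") (auto simp: card_1_singleton_iff)
  then show ?thesis
    by cases (subst I; auto simp: insert_Diff_if)+
qed

definition pure_coeffs_vanish :: "form \<Rightarrow> bool" where
  "pure_coeffs_vanish a \<longleftrightarrow> a $ {X3, X4, X5} = 0 \<and> a $ {X3, X4, X6} = 0 \<and> a $ {X3, X5, X6} = 0
     \<and> a $ {X4, X5, X6} = 0 \<and> a $ {X3, X4, X5, X6} = 0"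

lemma pure_coeffs_vanishD:
  assumes "pure_coeffs_vanish a" "I \<inter> {X1, X2} = {}" "3 \<le> card I"
  shows "a $ I = 0"
  using pure_index_sets[OF assms(2,3)] assms(1) by (auto simp: pure_coeffs_vanish_def)

lemmas dd_coeff_simps =
  dd_nth_ce_coeff UNIV_idx ee_eq insert_Diff_if sgn_merge_insert insert_commute

(* The listed coefficients of da form a linear system in the coefficients of a on e^I,
   I \<subseteq> {3,...,6}, whose only solution is zero. *)
lemma alg1_closed_pure_coeffs_vanish:
  assumes "dd alg1 a = 0"
  shows "pure_coeffs_vanish a"
proof -
  have "dd alg1 a $ {X1, X2, X3, X6} = 0" "dd alg1 a $ {X1, X3, X4, X5} = 0"
    "dd alg1 a $ {X1, X2, X5, X6} = 0" "dd alg1 a $ {X1, X3, X5, X6} = 0"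
    "dd alg1 a $ {X1, X2, X4, X5} = 0" "dd alg1 a $ {X1, X2, X4, X5, X6} = 0"
    using assms by simp_all
  then show ?thesis
    by (simp add: pure_coeffs_vanish_def dd_coeff_simps)
qed

lemma alg2_closed_pure_coeffs_vanish:
  assumes "dd alg2 a = 0"
  shows "pure_coeffs_vanish a"
proof -
  have "dd alg2 a $ {X1, X2, X3, X6} = 0" "dd alg2 a $ {X1, X3, X4, X5} = 0"
    "dd alg2 a $ {X1, X2, X5, X6} = 0" "dd alg2 a $ {X1, X3, X5, X6} = 0"
    "dd alg2 a $ {X1, X2, X4, X5} = 0" "dd alg2 a $ {X1, X2, X4, X5, X6} = 0"
    using assms by simp_all
  then show ?thesis
    by (simp add: pure_coeffs_vanish_def dd_coeff_simps)
qed

lemma alg3_closed_pure_coeffs_vanish: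
  assumes "dd alg3 a = 0"
  shows "pure_coeffs_vanish a"
proof -
  have "dd alg3 a $ {X1, X2, X3, X5} = 0" "dd alg3 a $ {X1, X2, X3, X6} = 0"
    "dd alg3 a $ {X1, X3, X4, X6} = 0" "dd alg3 a $ {X1, X2, X5, X6} = 0"
    "dd alg3 a $ {X1, X2, X3, X5, X6} = 0"
    using assms by simp_all
  then show ?thesis
    by (simp add: pure_coeffs_vanish_def dd_coeff_simps)
qed

lemma alg4_closed_pure_coeffs_vanish:
  assumes "dd alg4 a = 0"
  shows "pure_coeffs_vanish a"
proof -
  have "dd alg4 a $ {X1, X2, X4, X6} = 0" "dd alg4 a $ {X1, X2, X4, X5} = 0"
    "dd alg4 a $ {X2, X3, X4, X6} = 0" "dd alg4 a $ {X1, X2, X5, X6} = 0"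
    "dd alg4 a $ {X1, X2, X3, X5} = 0" "dd alg4 a $ {X1, X2, X3, X6} = 0"
    "dd alg4 a $ {X1, X2, X3, X5, X6} = 0"
    using assms by simp_all
  then show ?thesis
    by (simp add: pure_coeffs_vanish_def dd_coeff_simps)
qed

lemma alg5_closed_pure_coeffs_vanish:
  assumes "dd alg5 a = 0"
  shows "pure_coeffs_vanish a"
proof -
  have "dd alg5 a $ {X1, X2, X4, X6} = 0" "dd alg5 a $ {X1, X2, X3, X6} = 0"
    "dd alg5 a $ {X1, X3, X4, X6} = 0" "dd alg5 a $ {X1, X2, X5, X6} = 0"
    "dd alg5 a $ {X1, X2, X3, X5} = 0" "dd alg5 a $ {X1, X2, X3, X5, X6} = 0"
    using assms by simp_all
  then show ?thesis
    by (simp add: pure_coeffs_vanish_def dd_coeff_simps)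
qed

lemma alg6_closed_pure_coeffs_vanish:
  assumes "dd alg6 a = 0"
  shows "pure_coeffs_vanish a"
proof -
  have "dd alg6 a $ {X1, X2, X4, X6} = 0" "dd alg6 a $ {X1, X2, X3, X5} = 0"
    "dd alg6 a $ {X2, X3, X4, X5} = 0" "dd alg6 a $ {X1, X2, X5, X6} = 0"
    "dd alg6 a $ {X1, X2, X3, X6} = 0" "dd alg6 a $ {X1, X2, X3, X5, X6} = 0"
    using assms by simp_all
  then show ?thesis
    by (simp add: pure_coeffs_vanish_def dd_coeff_simps)
qed

lemma alg7_closed_pure_coeffs_vanish:
  assumes "dd alg7 a = 0"
  shows "pure_coeffs_vanish a"
proof -
  have "dd alg7 a $ {X1, X2, X4, X5} = 0" "dd alg7 a $ {X1, X2, X3, X5} = 0"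
    "dd alg7 a $ {X1, X3, X4, X5} = 0" "dd alg7 a $ {X1, X2, X5, X6} = 0"
    "dd alg7 a $ {X1, X2, X3, X6} = 0" "dd alg7 a $ {X1, X2, X3, X5, X6} = 0"
    using assms by simp_all
  then show ?thesis
    by (simp add: pure_coeffs_vanish_def dd_coeff_simps)
qed

lemma alg8_closed_pure_coeffs_vanish:
  assumes "dd alg8 a = 0"
  shows "pure_coeffs_vanish a"
proof -
  have "dd alg8 a $ {X1, X2, X3, X4} = 0" "dd alg8 a $ {X1, X3, X4, X5} = 0"
    "dd alg8 a $ {X1, X2, X3, X6} = 0" "dd alg8 a $ {X1, X2, X4, X6} = 0"
    "dd alg8 a $ {X1, X2, X3, X4, X6} = 0"
    using assms by simp_all
  then show ?thesis
    by (simp add: pure_coeffs_vanish_def dd_coeff_simps)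
qed

lemma closed_pure_vanish_algs:
  assumes "D \<in> {alg1, alg2, alg3, alg4, alg5, alg6, alg7, alg8}"
    and "dd D a = 0" "I \<inter> {X1, X2} = {}" "3 \<le> card I"
  shows "a $ I = 0"
proof -
  have "pure_coeffs_vanish a"
    using assms(1,2) alg1_closed_pure_coeffs_vanish alg2_closed_pure_coeffs_vanish
      alg3_closed_pure_coeffs_vanish alg4_closed_pure_coeffs_vanish
      alg5_closed_pure_coeffs_vanish alg6_closed_pure_coeffs_vanish
      alg7_closed_pure_coeffs_vanish alg8_closed_pure_coeffs_vanish
    by auto
  then show ?thesis
    using assms(3,4) by (rule pure_coeffs_vanishD)
qed

lemma adapted_algs:
  assumes "D \<in> {alg1, alg2, alg3, alg4, alg5, alg6, alg7, alg8}"
  shows "adapted D {X1, X2}"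
proof -
  have "D i \<in> supported (\<lambda>L. card L = 2 \<and> L \<inter> {X1, X2} \<noteq> {})" for i
    using assms
    by (cases i) (auto simp: ee_eq intro!: axis_in_supported
        subspace_add[OF subspace_supported] subspace_0[OF subspace_supported])
  then show ?thesis
    using assms by (auto simp: adapted_def)
qed

theorem lemma7:
  assumes "D \<in> {alg1, alg2, alg3, alg4, alg5, alg6, alg7, alg8}"
  shows "\<exists>V2. coherent D (span {e X1, e X2}) V2
           \<and> hpq D (span {e X1, e X2}) V2 0 3 = 0
           \<and> hpq D (span {e X1, e X2}) V2 0 4 = 0"
proof -
  let ?A = "{X1, X2}"
  have "hpq D (V1 ?A) (V2 ?A) 0 k = 0" if "3 \<le> k" for k
    using closed_pure_vanish_algs[OF assms] that
    by (intro hpq_0_eq_0_if_closed_pure_vanish) (auto simp: closed_forms_def)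
  moreover have "coherent D (V1 ?A) (V2 ?A)"
    using adapted_algs[OF assms] by (intro coherent_V1_V2) simp_all
  ultimately show ?thesis
    by (intro exI[of _ "V2 ?A"]) simp
qed

end
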